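(* For $n\ge 1$ and all $k\ge 0$, $$P^+(n+1,k)=(n-2k)S(n,k),\qquad P^-(n+1,k)=(1+k)S(n,k).$$ Equivalently, $P_{n+1}^+(x)=nS_n(x)-2xS_n'(x)$ and $P_{n+1}^-(x)=S_n(x)+xS_n'(x)$.
   Context: For a permutation $\pi$ of $[n]=\{1,\dots,n\}$, ${\rm des}(\pi)=\#\{i\in[n-1]:\pi(i)>\pi(i+1)\}$. A double descent is an index $i\in[n-2]$ with $\pi(i)>\pi(i+1)>\pi(i+2)$; $\pi$ is simsun if for every $k\in[n]$ the subword of $\pi$ consisting of the letters in $[k]$ (in order of appearance) has no double descents. Let $\mathcal{RS}_n$ be the set of simsun permutations of $[n]$, $S(n,k)=\#\{\pi\in\mathcal{RS}_n:{\rm des}(\pi)=k\}$, $S_n(x)=\sum_kS(n,k)x^k$. Let $\mathcal{RS}_n^+=\{\pi\in\mathcal{RS}_n:\pi(1)>\pi(2)\}$ and $\mathcal{RS}_n^-=\{\pi\in\mathcal{RS}_n:\pi(1)<\pi(2)\}$. An interior peak of $\pi$ is an index $i\in\{2,\dots,n-1\}$ with $\pi(i-1)<\pi(i)>\pi(i+1)$, and ${\rm pk}(\pi)$ is their number. Let $P^{\pm}(n,k)=\#\{\pi\in\mathcal{RS}_n^{\pm}:{\rm pk}(\pi)=k\}$ and $P_n^{\pm}(x)=\sum_k P^{\pm}(n,k)x^k$. *)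

theory Defs
  imports "HOL-Combinatorics.Multiset_Permutations"
begin

text \<open>Permutations of [n] are represented in one-line notation as lists
  (0-based list indices): xs ! i is the value pi(i+1).\<close>

definition des :: "nat list \<Rightarrow> nat" where
  "des xs = card {i. i + 1 < length xs \<and> xs ! i > xs ! (i + 1)}"

definition has_double_descent :: "nat list \<Rightarrow> bool" where
  "has_double_descent xs \<longleftrightarrow>
     (\<exists>i. i + 2 < length xs \<and> xs ! i > xs ! (i + 1) \<and> xs ! (i + 1) > xs ! (i + 2))"

definition simsun :: "nat \<Rightarrow> nat list \<Rightarrow> bool" where
  "simsun n xs \<longleftrightarrow> (\<forall>k\<in>{1..n}. \<not> has_double_descent (filter (\<lambda>x. x \<le> k) xs))"

definition RS :: "nat \<Rightarrow> nat list set" where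
  "RS n = {xs \<in> permutations_of_set {1..n}. simsun n xs}"

definition RS_plus :: "nat \<Rightarrow> nat list set" where
  "RS_plus n = {xs \<in> RS n. xs ! 0 > xs ! 1}"

definition RS_minus :: "nat \<Rightarrow> nat list set" where
  "RS_minus n = {xs \<in> RS n. xs ! 0 < xs ! 1}"

text \<open>Interior peaks: positions 2..n-1 in 1-based indexing, i.e. 1..n-2 0-based.\<close>
definition pk :: "nat list \<Rightarrow> nat" where
  "pk xs = card {i. 0 < i \<and> i + 1 < length xs \<and> xs ! (i - 1) < xs ! i \<and> xs ! i > xs ! (i + 1)}"

definition S :: "nat \<Rightarrow> nat \<Rightarrow> nat" where
  "S n k = card {xs \<in> RS n. des xs = k}"

definition P_plus :: "nat \<Rightarrow> nat \<Rightarrow> nat" where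
  "P_plus n k = card {xs \<in> RS_plus n. pk xs = k}"

definition P_minus :: "nat \<Rightarrow> nat \<Rightarrow> nat" where
  "P_minus n k = card {xs \<in> RS_minus n. pk xs = k}"

end

theory Submission
  imports Defs
begin

text \<open>Every simsun permutation of [m+1] arises in exactly one way by inserting m+1 into a simsun
  permutation xs of [m] at a gap that does not immediately precede a descent top: these are
  precisely the insertions that create no double descent. If xs has d descents, the d+1 gaps
  following a descent or at the end keep the number of descents, and the remaining m-2d admissible
  gaps raise it by one. Since a simsun permutation has no double descents, its peaks are its
  descents at positions other than the first, so P^- and P^+ count permutations by their first step
  and their number of descents. Following how an insertion changes the first step turns these
  counts into linear recurrences in m, and induction on n gives the formulas.\<close>

definition insert_at :: "nat \<Rightarrow> 'a \<Rightarrow> 'a list \<Rightarrow> 'a list" where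
  "insert_at j x xs = take j xs @ x # drop j xs"

lemma length_insert_at [simp]: "length (insert_at j x xs) = Suc (length xs)"
  by (simp add: insert_at_def)

lemma set_insert_at [simp]: "set (insert_at j x xs) = insert x (set xs)"
proof -
  have "set xs = set (take j xs) \<union> set (drop j xs)"
    by (metis append_take_drop_id set_append)
  then show ?thesis
    by (auto simp: insert_at_def)
qed

lemma distinct_insert_at [simp]: "distinct (insert_at j x xs) \<longleftrightarrow> x \<notin> set xs \<and> distinct xs"
proof -
  have "mset (insert_at j x xs) = mset (x # xs)"
    by (metis append_take_drop_id insert_at_def mset.simps(2) mset_append union_mset_add_mset_right)
  then show ?thesis
    by (metis distinct.simps(2) mset_eq_imp_distinct_iff)
qed

lemma filter_insert_at: "\<not> P x \<Longrightarrow> filter P (insert_at j x xs) = filter P xs"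
  by (simp add: insert_at_def) (metis append_take_drop_id filter_append)

lemma nth_insert_at:
  assumes "j \<le> length xs"
  shows "insert_at j x xs ! i = (if i < j then xs ! i else if i = j then x else xs ! (i - 1))"
  using assms by (auto simp: insert_at_def nth_append nth_Cons' min_def)

lemma insert_at_inject:
  assumes "insert_at j x xs = insert_at i x ys" "x \<notin> set xs" "x \<notin> set ys"
    and "j \<le> length xs" "i \<le> length ys"
  shows "xs = ys \<and> j = i"
proof -
  have "x \<notin> set (take j xs)" "x \<notin> set (take i ys)"
    using assms(2,3) by (auto dest: in_set_takeD)
  moreover have "x \<notin> set (drop j xs)" "x \<notin> set (drop i ys)"
    using assms(2,3) by (auto dest: in_set_dropD)
  ultimately have "take j xs = take i ys" "drop j xs = drop i ys"
    using assms(1) by (simp_all add: insert_at_def append_Cons_eq_iff)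
  moreover from this(1) have "j = i"
    using assms(4,5) by (metis length_take min_absorb2)
  ultimately show ?thesis
    by (metis append_take_drop_id)
qed

definition descents :: "nat list \<Rightarrow> nat set" where
  "descents xs = {i. i + 1 < length xs \<and> xs ! i > xs ! (i + 1)}"

lemma des_eq_card_descents: "des xs = card (descents xs)"
  by (simp add: des_def descents_def)

lemma finite_descents [simp]: "finite (descents xs)"
  by (rule finite_subset[of _ "{..<length xs}"]) (auto simp: descents_def)

lemma Suc_descent_less_length: "i \<in> descents xs \<Longrightarrow> Suc i < length xs"
  by (simp add: descents_def)

lemma length_notin_Suc_descents: "length xs \<notin> Suc ` descents xs"
  by (auto dest: Suc_descent_less_length)

lemma has_double_descent_iff_descents:
  "has_double_descent xs \<longleftrightarrow> (\<exists>i. i \<in> descents xs \<and> Suc i \<in> descents xs)"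
  unfolding has_double_descent_def descents_def by (auto simp: numeral_2_eq_2) (blast dest: Suc_lessD)

lemma descents_insert_at:
  assumes "j \<le> length xs" and "\<forall>y\<in>set xs. y < x"
  shows "descents (insert_at j x xs) =
    {i \<in> descents xs. Suc i < j} \<union> (if j < length xs then {j} else {}) \<union>
      Suc ` {i \<in> descents xs. j \<le> i}"
proof (rule set_eqI)
  fix i
  have less: "xs ! k < x" if "k < length xs" for k
    using assms(2) that by auto
  have Suc_image: "i \<in> Suc ` A \<longleftrightarrow> 0 < i \<and> i - 1 \<in> A" for A
    by (cases i) auto
  consider "Suc i < j" | "Suc i = j" | "i = j" | "j < i" by linarith
  then show "i \<in> descents (insert_at j x xs) \<longleftrightarrow>
    i \<in> {i \<in> descents xs. Suc i < j} \<union> (if j < length xs then {j} else {}) \<union>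
      Suc ` {i \<in> descents xs. j \<le> i}"
    by cases (use assms(1) less[of i] in \<open>auto simp: Suc_image descents_def nth_insert_at\<close>)
qed

lemma des_insert_at:
  assumes "j \<le> length xs" and "\<forall>y\<in>set xs. y < x"
  shows "des (insert_at j x xs) + of_bool (j \<in> Suc ` descents xs) = des xs + of_bool (j < length xs)"
proof -
  define D where "D = descents xs"
  define L where "L = {i \<in> D. Suc i < j}"
  define R where "R = {i \<in> D. j \<le> i}"
  have card3: "card (A \<union> B \<union> C) = card A + card B + card C"
    if "finite A" "finite B" "finite C" "A \<inter> B = {}" "(A \<union> B) \<inter> C = {}" for A B C :: "nat set"
    using that by (simp add: card_Un_disjoint)
  define C where "C = (if j \<in> Suc ` D then {j - 1} else {})"
  have "D = L \<union> C \<union> R"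
    by (auto simp: L_def R_def C_def image_iff Suc_lessI)
  then have "card D = card L + card C + card R"
    by (simp only:) (rule card3, auto simp: L_def R_def C_def D_def)
  moreover have "des (insert_at j x xs) =
      card L + card (if j < length xs then {j} else {}) + card (Suc ` R)"
    unfolding des_eq_card_descents descents_insert_at[OF assms] D_def[symmetric]
      L_def[symmetric] R_def[symmetric]
    by (rule card3) (auto simp: L_def R_def D_def)
  ultimately show ?thesis
    by (simp add: des_eq_card_descents D_def C_def card_image)
qed

lemma has_double_descent_insert_at:
  assumes "\<not> has_double_descent xs" and "j \<le> length xs" and "\<forall>y\<in>set xs. y < x"
  shows "has_double_descent (insert_at j x xs) \<longleftrightarrow> j \<in> descents xs"
  using assms(1) unfolding has_double_descent_iff_descents descents_insert_at[OF assms(2,3)]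
  by (auto simp: descents_def)

lemma pk_eq_card_descents:
  assumes "distinct xs" and "\<not> has_double_descent xs"
  shows "pk xs = card (descents xs - {0})"
proof -
  have "xs ! (i - 1) < xs ! i" if "i \<in> descents xs" "0 < i" for i
  proof -
    have "i - 1 \<notin> descents xs" "Suc (i - 1) = i"
      using that assms(2) by (auto simp: has_double_descent_iff_descents)
    moreover have "xs ! (i - 1) \<noteq> xs ! i"
      using that assms(1) by (auto simp: descents_def nth_eq_iff_index_eq)
    ultimately show ?thesis
      using that by (auto simp: descents_def)
  qed
  then show ?thesis
    unfolding pk_def by (auto intro!: arg_cong[where f = card] simp: descents_def)
qed

lemma RS_D:
  assumes "xs \<in> RS m"
  shows "set xs = {1..m}" and "distinct xs" and "length xs = m"
  using assms distinct_card[of xs] by (auto simp: RS_def permutations_of_set_def)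

lemma finite_RS [simp]: "finite (RS m)"
  by (rule finite_subset[of _ "permutations_of_set {1..m}"]) (auto simp: RS_def)

lemma RS_no_double_descent:
  assumes "xs \<in> RS m"
  shows "\<not> has_double_descent xs"
proof (cases "m = 0")
  case True
  then show ?thesis
    using RS_D(3)[OF assms] by (simp add: has_double_descent_def)
next
  case False
  have "filter (\<lambda>x. x \<le> m) xs = xs"
    using RS_D(1)[OF assms] by (simp add: filter_id_conv)
  moreover have "\<not> has_double_descent (filter (\<lambda>x. x \<le> m) xs)"
    using assms False by (simp add: RS_def simsun_def)
  ultimately show ?thesis
    by simp
qed

lemma simsun_Suc_insert_at:
  assumes "set xs = {1..m}"
  shows "simsun (Suc m) (insert_at j (Suc m) xs) \<longleftrightarrow>
    simsun m xs \<and> \<not> has_double_descent (insert_at j (Suc m) xs)"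
proof -
  have "{1..Suc m} = insert (Suc m) {1..m}"
    by auto
  moreover have "filter (\<lambda>x. x \<le> Suc m) (insert_at j (Suc m) xs) = insert_at j (Suc m) xs"
    using assms by (simp add: filter_id_conv)
  moreover have "filter (\<lambda>x. x \<le> k) (insert_at j (Suc m) xs) = filter (\<lambda>x. x \<le> k) xs"
    if "k \<le> m" for k
    using that by (simp add: filter_insert_at)
  ultimately show ?thesis
    by (auto simp: simsun_def)
qed

text \<open>Gap j of xs lies between xs ! (j - 1) and xs ! j; inserting a new maximum there creates a
  double descent iff xs ! j starts a descent.\<close>

definition admissible_gaps :: "nat list \<Rightarrow> nat set" where
  "admissible_gaps xs = {j. j \<le> length xs \<and> j \<notin> descents xs}"

lemma finite_admissible_gaps [simp]: "finite (admissible_gaps xs)"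
  by (simp add: admissible_gaps_def)

lemma insert_at_RS_iff:
  assumes "xs \<in> RS m" and "j \<le> m"
  shows "insert_at j (Suc m) xs \<in> RS (Suc m) \<longleftrightarrow> j \<in> admissible_gaps xs"
proof -
  note xs = RS_D[OF assms(1)]
  have "\<forall>y\<in>set xs. y < Suc m"
    using xs(1) by auto
  then have "has_double_descent (insert_at j (Suc m) xs) \<longleftrightarrow> j \<in> descents xs"
    using has_double_descent_insert_at RS_no_double_descent[OF assms(1)] assms(2) xs(3) by blast
  moreover have "simsun m xs"
    using assms(1) by (simp add: RS_def)
  ultimately show ?thesis
    using xs assms(2) by (auto simp: RS_def permutations_of_set_def simsun_Suc_insert_at admissible_gaps_def)
qed

lemma RS_SucE:
  assumes "s \<in> RS (Suc m)"
  obtains xs j where "xs \<in> RS m" and "j \<le> m" and "s = insert_at j (Suc m) xs"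
proof -
  have "Suc m \<in> set s"
    using RS_D(1)[OF assms] by simp
  then obtain u v where uv: "s = u @ Suc m # v"
    using split_list by metis
  define xs where "xs = u @ v"
  have ins: "s = insert_at (length u) (Suc m) xs"
    by (simp add: insert_at_def xs_def uv)
  have "y \<in> set xs \<longleftrightarrow> y \<in> set s \<and> y \<noteq> Suc m" for y
    using RS_D(2)[OF assms] by (auto simp: uv xs_def)
  then have "set xs = {1..m}"
    using RS_D(1)[OF assms] by auto
  moreover have "distinct xs"
    using RS_D(2)[OF assms] by (simp add: uv xs_def)
  moreover have "simsun m xs"
    using assms ins calculation(1) by (simp add: RS_def simsun_Suc_insert_at)
  ultimately have xs: "xs \<in> RS m"
    by (simp add: RS_def permutations_of_set_def)
  moreover have "length u \<le> m"
    using RS_D(3)[OF xs] by (simp add: xs_def)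
  ultimately show ?thesis
    using ins that by blast
qed

lemma bij_betw_insert_at_RS:
  "bij_betw (\<lambda>(xs, j). insert_at j (Suc m) xs) (SIGMA xs:RS m. admissible_gaps xs) (RS (Suc m))"
proof (rule bij_betw_imageI)
  show "inj_on (\<lambda>(xs, j). insert_at j (Suc m) xs) (SIGMA xs:RS m. admissible_gaps xs)"
  proof (rule inj_onI, clarsimp)
    fix xs j ys i
    assume "insert_at j (Suc m) xs = insert_at i (Suc m) ys" "xs \<in> RS m" "ys \<in> RS m"
      "j \<in> admissible_gaps xs" "i \<in> admissible_gaps ys"
    then show "xs = ys \<and> j = i"
      using insert_at_inject[of j "Suc m" xs i ys] RS_D[of xs m] RS_D[of ys m]
      by (auto simp: admissible_gaps_def)
  qed
  show "(\<lambda>(xs, j). insert_at j (Suc m) xs) ` (SIGMA xs:RS m. admissible_gaps xs) = RS (Suc m)"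
  proof (rule set_eqI, rule iffI)
    fix s
    assume "s \<in> (\<lambda>(xs, j). insert_at j (Suc m) xs) ` (SIGMA xs:RS m. admissible_gaps xs)"
    then obtain xs j where "s = insert_at j (Suc m) xs" "xs \<in> RS m" "j \<in> admissible_gaps xs"
      by auto
    then show "s \<in> RS (Suc m)"
      using insert_at_RS_iff[of xs m j] RS_D(3)[of xs m] by (auto simp: admissible_gaps_def)
  next
    fix s
    assume "s \<in> RS (Suc m)"
    then obtain xs j where "xs \<in> RS m" "j \<le> m" "s = insert_at j (Suc m) xs"
      by (rule RS_SucE)
    then show "s \<in> (\<lambda>(xs, j). insert_at j (Suc m) xs) ` (SIGMA xs:RS m. admissible_gaps xs)"
      using \<open>s \<in> RS (Suc m)\<close> insert_at_RS_iff[of xs m j] by force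
  qed
qed

lemma card_RS_Suc:
  "card {s \<in> RS (Suc m). P s} = (\<Sum>xs\<in>RS m. card {j \<in> admissible_gaps xs. P (insert_at j (Suc m) xs)})"
proof -
  let ?ins = "\<lambda>(xs, j). insert_at j (Suc m) xs"
  have "bij_betw ?ins {p \<in> (SIGMA xs:RS m. admissible_gaps xs). P (?ins p)} {s \<in> RS (Suc m). P s}"
    by (rule bij_betw_Collect[OF bij_betw_insert_at_RS]) simp
  moreover have "{p \<in> (SIGMA xs:RS m. admissible_gaps xs). P (?ins p)} =
      (SIGMA xs:RS m. {j \<in> admissible_gaps xs. P (insert_at j (Suc m) xs)})"
    by (auto simp: Sigma_def)
  ultimately have "card {s \<in> RS (Suc m). P s} =
      card (SIGMA xs:RS m. {j \<in> admissible_gaps xs. P (insert_at j (Suc m) xs)})"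
    by (simp add: bij_betw_same_card)
  then show ?thesis
    by simp
qed

definition des_preserving_gaps :: "nat list \<Rightarrow> nat set" where
  "des_preserving_gaps xs = insert (length xs) (Suc ` descents xs)"

lemma des_insert_at_admissible_gap:
  assumes "\<forall>y\<in>set xs. y < x" and "j \<in> admissible_gaps xs"
  shows "des (insert_at j x xs) = (if j \<in> des_preserving_gaps xs then des xs else Suc (des xs))"
proof -
  have "j \<le> length xs"
    using assms(2) by (simp add: admissible_gaps_def)
  moreover have "j < length xs" if "j \<in> Suc ` descents xs"
    using that by (auto dest: Suc_descent_less_length)
  ultimately show ?thesis
    using des_insert_at[OF _ assms(1), of j] length_notin_Suc_descents
    by (auto simp: des_preserving_gaps_def)
qed

lemma des_preserving_gaps_subset:
  assumes "\<not> has_double_descent xs"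
  shows "des_preserving_gaps xs \<subseteq> admissible_gaps xs"
  using assms Suc_descent_less_length[of "length xs" xs]
  by (auto simp: des_preserving_gaps_def admissible_gaps_def has_double_descent_iff_descents
      dest: Suc_descent_less_length)

lemma card_des_preserving_gaps: "card (des_preserving_gaps xs) = Suc (des xs)"
  using length_notin_Suc_descents
  by (simp add: des_preserving_gaps_def card_image des_eq_card_descents)

lemma card_admissible_gaps: "card (admissible_gaps xs) + des xs = Suc (length xs)"
proof -
  have "admissible_gaps xs = {..length xs} - descents xs"
    by (auto simp: admissible_gaps_def)
  moreover have "descents xs \<subseteq> {..length xs}"
    by (auto dest: Suc_descent_less_length)
  ultimately show ?thesis
    using card_mono[of "{..length xs}" "descents xs"]
    by (simp add: card_Diff_subset des_eq_card_descents)
qed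

lemma card_admissible_gaps_des:
  assumes "\<not> has_double_descent xs" and "\<forall>y\<in>set xs. y < x"
  shows "int (card {j \<in> admissible_gaps xs. des (insert_at j x xs) = k}) =
    of_bool (k = des xs) * (int (des xs) + 1) +
    of_bool (k = des xs + 1) * (int (length xs) - 2 * int (des xs))"
proof -
  let ?G = "admissible_gaps xs" and ?T = "des_preserving_gaps xs"
  have "?T \<subseteq> ?G"
    using des_preserving_gaps_subset[OF assms(1)] .
  then have "card (?G - ?T) + 2 * des xs = length xs"
    using card_admissible_gaps[of xs] card_des_preserving_gaps[of xs] card_mono[of ?G ?T]
    by (simp add: card_Diff_subset finite_subset)
  moreover have "{j \<in> ?G. des (insert_at j x xs) = k} =
      (if k = des xs then ?T else if k = des xs + 1 then ?G - ?T else {})"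
    using des_insert_at_admissible_gap[OF assms(2)] \<open>?T \<subseteq> ?G\<close> by (auto split: if_splits)
  ultimately show ?thesis
    by (auto simp: card_des_preserving_gaps)
qed

lemma RS_nth_0_neq_nth_1:
  assumes "xs \<in> RS n" and "2 \<le> n"
  shows "xs ! 0 \<noteq> xs ! 1"
  using RS_D(2,3)[OF assms(1)] assms(2) by (simp add: nth_eq_iff_index_eq)

text \<open>Of the admissible gaps, only gap 0 destroys an initial ascent (it adds a descent), and only
  gap 1 turns an initial descent into an ascent (it keeps the number of descents).\<close>

lemma card_ascent_insertions:
  assumes "xs \<in> RS m" and "2 \<le> m"
  defines "s \<equiv> \<lambda>j. insert_at j (Suc m) xs"
  shows "card {j \<in> admissible_gaps xs. s j ! 0 < s j ! 1 \<and> des (s j) = k} +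
      of_bool (xs ! 0 < xs ! 1 \<and> k = des xs + 1) =
    (if xs ! 0 < xs ! 1 then card {j \<in> admissible_gaps xs. des (s j) = k} else of_bool (k = des xs))"
proof -
  note xs = RS_D[OF assms(1)]
  have less: "\<forall>y\<in>set xs. y < Suc m"
    using xs(1) by auto
  moreover have "0 < length xs" "1 < length xs"
    using xs(3) assms(2) by auto
  ultimately have "xs ! 0 < Suc m" "xs ! 1 < Suc m"
    by (meson nth_mem)+
  then have ascent_iff: "s j ! 0 < s j ! 1 \<longleftrightarrow> j = 1 \<or> (2 \<le> j \<and> xs ! 0 < xs ! 1)" if "j \<le> m" for j
    using that xs(3) by (cases "j = 0 \<or> j = 1") (auto simp: s_def nth_insert_at)
  have gap_le: "j \<le> m" if "j \<in> admissible_gaps xs" for j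
    using that xs(3) by (simp add: admissible_gaps_def)
  show ?thesis
  proof (cases "xs ! 0 < xs ! 1")
    case True
    then have "0 \<in> admissible_gaps xs"
      by (simp add: admissible_gaps_def descents_def)
    moreover have "des (s 0) = des xs + 1"
      using des_insert_at[OF _ less, of 0] xs(3) assms(2) by (simp add: s_def)
    moreover have "{j \<in> admissible_gaps xs. s j ! 0 < s j ! 1 \<and> des (s j) = k} =
        {j \<in> admissible_gaps xs. des (s j) = k} - {0}"
      using ascent_iff gap_le True by auto
    moreover have "0 \<in> {j \<in> admissible_gaps xs. des (s j) = k} \<longleftrightarrow> k = des xs + 1"
      using calculation(1,2) by auto
    ultimately show ?thesis
      using True card.remove[of "{j \<in> admissible_gaps xs. des (s j) = k}" 0] by auto
  next
    case False
    then have "0 \<in> descents xs"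
      using RS_nth_0_neq_nth_1[OF assms(1,2)] xs(3) assms(2) by (simp add: descents_def)
    then have "1 \<in> admissible_gaps xs"
      using RS_no_double_descent[OF assms(1)] xs(3) assms(2)
      by (auto simp: admissible_gaps_def has_double_descent_iff_descents)
    moreover have "des (s 1) = des xs"
      using des_insert_at[OF _ less, of 1] \<open>0 \<in> descents xs\<close> xs(3) assms(2) by (simp add: s_def)
    moreover have "{j \<in> admissible_gaps xs. s j ! 0 < s j ! 1 \<and> des (s j) = k} =
        (if k = des xs then {1} else {})"
      using ascent_iff gap_le False calculation by auto
    then show ?thesis
      using False by simp
  qed
qed

definition S_minus :: "nat \<Rightarrow> nat \<Rightarrow> nat" where
  "S_minus n k = card {xs \<in> RS_minus n. des xs = k}"

definition S_plus :: "nat \<Rightarrow> nat \<Rightarrow> nat" where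
  "S_plus n k = card {xs \<in> RS_plus n. des xs = k}"

lemma S_eq_S_minus_add_S_plus:
  assumes "2 \<le> n"
  shows "S n k = S_minus n k + S_plus n k"
proof -
  have "{xs \<in> RS n. des xs = k} = {xs \<in> RS_minus n. des xs = k} \<union> {xs \<in> RS_plus n. des xs = k}"
    using RS_nth_0_neq_nth_1[OF _ assms] by (auto simp: RS_minus_def RS_plus_def nat_neq_iff)
  then show ?thesis
    unfolding S_def S_minus_def S_plus_def
    by (simp add: card_Un_disjoint RS_minus_def RS_plus_def disjoint_iff)
qed

lemma P_minus_eq_S_minus:
  assumes "2 \<le> n"
  shows "P_minus n k = S_minus n k"
proof -
  have "pk xs = des xs" if "xs \<in> RS_minus n" for xs
    using that pk_eq_card_descents[OF RS_D(2)[of xs n] RS_no_double_descent[of xs n]]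
    by (auto simp: RS_minus_def des_eq_card_descents descents_def)
  then have "{xs \<in> RS_minus n. pk xs = k} = {xs \<in> RS_minus n. des xs = k}"
    by auto
  then show ?thesis
    by (simp add: P_minus_def S_minus_def)
qed

lemma P_plus_eq_S_plus:
  assumes "2 \<le> n"
  shows "P_plus n k = S_plus n (Suc k)"
proof -
  have "des xs = Suc (pk xs)" if "xs \<in> RS_plus n" for xs
  proof -
    have "0 \<in> descents xs"
      using that RS_D(3)[of xs n] assms by (auto simp: RS_plus_def descents_def)
    then have "card (descents xs) > 0"
      by (auto simp: card_gt_0_iff)
    then show ?thesis
      using \<open>0 \<in> descents xs\<close> that pk_eq_card_descents[OF RS_D(2)[of xs n] RS_no_double_descent[of xs n]]
      by (simp add: RS_plus_def des_eq_card_descents)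
  qed
  then have "{xs \<in> RS_plus n. pk xs = k} = {xs \<in> RS_plus n. des xs = Suc k}"
    by auto
  then show ?thesis
    by (simp add: P_plus_def S_plus_def)
qed

lemma S_Suc:
  "int (S (Suc m) k) =
    (int k + 1) * int (S m k) + (int m + 2 - 2 * int k) * int (card {xs \<in> RS m. des xs + 1 = k})"
proof -
  have "int (S (Suc m) k) = (\<Sum>xs\<in>RS m. int (card {j \<in> admissible_gaps xs. des (insert_at j (Suc m) xs) = k}))"
    by (simp add: S_def card_RS_Suc)
  also have "\<dots> = (\<Sum>xs\<in>RS m. of_bool (des xs = k) * (int k + 1) +
      of_bool (des xs + 1 = k) * (int m + 2 - 2 * int k))"
  proof (rule sum.cong)
    fix xs
    assume xs: "xs \<in> RS m"
    have "\<forall>y\<in>set xs. y < Suc m"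
      using RS_D(1)[OF xs] by auto
    then show "int (card {j \<in> admissible_gaps xs. des (insert_at j (Suc m) xs) = k}) =
        of_bool (des xs = k) * (int k + 1) + of_bool (des xs + 1 = k) * (int m + 2 - 2 * int k)"
      using card_admissible_gaps_des[OF RS_no_double_descent[OF xs]] RS_D(3)[OF xs] by auto
  qed simp
  finally show ?thesis
    by (simp add: sum.distrib Int_def S_def mult.commute)
qed

lemma S_minus_Suc:
  assumes "2 \<le> m"
  shows "int (S_minus (Suc m) k) =
    (int k + 1) * int (S_minus m k) +
    (int m + 1 - 2 * int k) * int (card {xs \<in> RS_minus m. des xs + 1 = k}) + int (S_plus m k)"
proof -
  have "S_minus (Suc m) k = card {s \<in> RS (Suc m). s ! 0 < s ! 1 \<and> des s = k}"
    by (simp add: S_minus_def RS_minus_def)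
  then have "int (S_minus (Suc m) k) = (\<Sum>xs\<in>RS m. int (card {j \<in> admissible_gaps xs.
      insert_at j (Suc m) xs ! 0 < insert_at j (Suc m) xs ! 1 \<and> des (insert_at j (Suc m) xs) = k}))"
    by (simp add: card_RS_Suc)
  also have "\<dots> = (\<Sum>xs\<in>RS m. of_bool (xs \<in> RS_minus m \<and> des xs = k) * (int k + 1) +
      of_bool (xs \<in> RS_minus m \<and> des xs + 1 = k) * (int m + 1 - 2 * int k) +
      of_bool (xs \<in> RS_plus m \<and> des xs = k))"
  proof (rule sum.cong)
    fix xs
    assume xs: "xs \<in> RS m"
    have "\<forall>y\<in>set xs. y < Suc m"
      using RS_D(1)[OF xs] by auto
    then show "int (card {j \<in> admissible_gaps xs.
      insert_at j (Suc m) xs ! 0 < insert_at j (Suc m) xs ! 1 \<and> des (insert_at j (Suc m) xs) = k}) =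
      of_bool (xs \<in> RS_minus m \<and> des xs = k) * (int k + 1) +
      of_bool (xs \<in> RS_minus m \<and> des xs + 1 = k) * (int m + 1 - 2 * int k) +
      of_bool (xs \<in> RS_plus m \<and> des xs = k)"
      using card_ascent_insertions[OF xs assms, of k]
        card_admissible_gaps_des[OF RS_no_double_descent[OF xs], of "Suc m" k]
        RS_D(3)[OF xs] RS_nth_0_neq_nth_1[OF xs assms] xs
      by (auto simp: RS_minus_def RS_plus_def)
  qed simp
  finally show ?thesis
    by (simp add: sum.distrib Int_def S_minus_def S_plus_def RS_minus_def RS_plus_def mult.commute)
qed

lemma short_list_no_double_descent: "length xs \<le> 2 \<Longrightarrow> \<not> has_double_descent xs"
  by (auto simp: has_double_descent_def)

lemma RS_1: "RS 1 = {[1]}"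
proof -
  have "simsun 1 [1]"
    by (auto simp: simsun_def short_list_no_double_descent)
  then show ?thesis
    by (auto simp: RS_def)
qed

lemma RS_2: "RS 2 = {[1, 2], [2, 1]}"
proof -
  have "{1..2::nat} = {1, 2}"
    by auto
  moreover have "simsun 2 [1, 2]" "simsun 2 [2, 1]"
    by (auto simp: simsun_def intro!: short_list_no_double_descent order.trans[OF length_filter_le])
  ultimately show ?thesis
    by (auto simp: RS_def permutations_of_set_doubleton)
qed

lemma S_1: "S 1 k = of_bool (k = 0)"
proof -
  have "des [1] = 0"
    by (simp add: des_def)
  then have "{xs \<in> RS 1. des xs = k} = (if k = 0 then {[1]} else {})"
    unfolding RS_1 by auto
  then show ?thesis
    by (simp add: S_def)
qed

lemma P_minus_2: "P_minus 2 k = of_bool (k = 0)"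
proof -
  have "pk [1, 2] = 0"
    by (auto simp: pk_def)
  then have "{xs \<in> RS_minus 2. pk xs = k} = (if k = 0 then {[1, 2]} else {})"
    by (auto simp: RS_minus_def RS_2)
  then show ?thesis
    by (simp add: P_minus_def)
qed

lemma P_plus_2: "P_plus 2 k = of_bool (k = 0)"
proof -
  have "pk [2, 1] = 0"
    by (auto simp: pk_def)
  then have "{xs \<in> RS_plus 2. pk xs = k} = (if k = 0 then {[2, 1]} else {})"
    by (auto simp: RS_plus_def RS_2)
  then show ?thesis
    by (simp add: P_plus_def)
qed

lemma peak_counts_Suc:
  assumes "1 \<le> n"
    and IH_plus: "\<And>k. int (P_plus (Suc n) k) = (int n - 2 * int k) * int (S n k)"
    and IH_minus: "\<And>k. P_minus (Suc n) k = (1 + k) * S n k"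
  shows "int (P_plus (Suc (Suc n)) k) = (int (Suc n) - 2 * int k) * int (S (Suc n) k)"
    and "P_minus (Suc (Suc n)) k = (1 + k) * S (Suc n) k"
proof -
  define m where "m = Suc n"
  have m: "2 \<le> m"
    using assms(1) by (simp add: m_def)
  have minus: "int (S_minus m k) = (1 + int k) * int (S n k)" for k
    using IH_minus[of k] P_minus_eq_S_minus[OF m] by (simp add: m_def algebra_simps)
  have plus: "int (S_plus m (Suc k)) = (int n - 2 * int k) * int (S n k)" for k
    using IH_plus[of k] P_plus_eq_S_plus[OF m] by (simp add: m_def)
  have minus_Suc: "int (S_minus (Suc m) k) = (1 + int k) * int (S m k)" for k
  proof -
    have "(int m + 1 - 2 * int k) * int (card {xs \<in> RS_minus m. des xs + 1 = k}) = int k * int (S_plus m k)"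
    proof (cases k)
      case (Suc k')
      then have "card {xs \<in> RS_minus m. des xs + 1 = k} = S_minus m k'"
        by (simp add: S_minus_def)
      then show ?thesis
        unfolding Suc by (simp only: minus plus) (simp add: m_def algebra_simps)
    qed simp
    then show ?thesis
      using S_minus_Suc[OF m, of k] S_eq_S_minus_add_S_plus[OF m, of k] by (simp add: algebra_simps)
  qed
  have "int (S_plus (Suc m) (Suc k)) = int (S (Suc m) (Suc k)) - int (S_minus (Suc m) (Suc k))"
    using S_eq_S_minus_add_S_plus[of "Suc m" "Suc k"] m by simp
  also have "\<dots> = (int m - 2 * int k) * int (S m k)"
    using S_Suc[of m "Suc k"] minus_Suc[of "Suc k"] by (simp add: S_def algebra_simps)
  finally show "int (P_plus (Suc (Suc n)) k) = (int (Suc n) - 2 * int k) * int (S (Suc n) k)"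
    using P_plus_eq_S_plus[of "Suc m" k] m by (simp add: m_def)
  have "int (P_minus (Suc m) k) = int ((1 + k) * S m k)"
    using minus_Suc[of k] P_minus_eq_S_minus[of "Suc m" k] m by (simp add: algebra_simps)
  then show "P_minus (Suc (Suc n)) k = (1 + k) * S (Suc n) k"
    by (simp only: of_nat_eq_iff m_def)
qed

theorem lemma5:
  fixes n k :: nat
  assumes "n \<ge> 1"
  shows "int (P_plus (n + 1) k) = (int n - 2 * int k) * int (S n k)
       \<and> P_minus (n + 1) k = (1 + k) * S n k"
  using assms
proof (induction n arbitrary: k rule: nat_induct_at_least)
  case base
  show ?case
    using P_plus_2 P_minus_2 S_1 by (cases "k = 0") (simp_all add: numeral_2_eq_2)
next
  case (Suc n)
  have "int (P_plus (Suc n) k) = (int n - 2 * int k) * int (S n k)"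
    "P_minus (Suc n) k = (1 + k) * S n k" for k
    using Suc.IH[of k] by simp_all
  from peak_counts_Suc[OF Suc.hyps this] show ?case
    by simp
qed

end
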